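(* Let $\{x^k\}_k$, $\{z^k\}_k$ be generated by the normal map-based stochastic proximal gradient method described in the context. Then for all integers $0\le m<n$ and every sample $\omega$ with $L(\omega)<\infty$, writing $\tau=\tau_{m,n}$ and $e=e^{m,n}$, \begin{align*} \|F^\lambda_{\mathrm{nor}}(z^n)\|^2&\le\Big(1-\frac{\tau}{\lambda}\Big)^2\|F^\lambda_{\mathrm{nor}}(z^m)\|^2+\Big(L^2+\frac{2L}{\lambda}+\frac1{\lambda^2}\Big)\|x^n-x^m\|^2+\frac{1}{\lambda^2}\|e\|^2\\ &\quad+\frac2\lambda\Big(1-\frac\tau\lambda\Big)\big\langle F^\lambda_{\mathrm{nor}}(z^m),\lambda(\nabla f(x^n)-\nabla f(x^m))-(x^n-x^m)+e\big\rangle\\ &\quad+\frac2\lambda\langle\nabla f(x^n)-\nabla f(x^m),e\rangle-\frac{2}{\lambda^2}\langle e,x^n-x^m\rangle. \end{align*}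
   Context: Let $\varphi:\mathbb{R}^d\to(-\infty,\infty]$ be convex, lower semicontinuous and proper, let $f:\mathbb{R}^d\to\mathbb{R}$ be continuously differentiable on an open set containing $\mathrm{dom}\,\varphi$, and set $\psi=f+\varphi$. For $\lambda>0$ let $\mathrm{prox}_{\lambda\varphi}(x)=\operatorname{argmin}_y\{\varphi(y)+\frac{1}{2\lambda}\|x-y\|^2\}$, $\mathrm{env}_{\lambda\varphi}$ the Moreau envelope with $\nabla\mathrm{env}_{\lambda\varphi}(x)=(x-\mathrm{prox}_{\lambda\varphi}(x))/\lambda$, and $F^\lambda_{\mathrm{nor}}(z)=\nabla f(\mathrm{prox}_{\lambda\varphi}(z))+\frac1\lambda(z-\mathrm{prox}_{\lambda\varphi}(z))$. Method: on a filtered probability space $(\Omega,\mathcal F,\{\mathcal F_k\}_k,\mathbb P)$, with $\lambda>0$, step sizes $\alpha_k>0$, deterministic $z^0$, $x^0=\mathrm{prox}_{\lambda\varphi}(z^0)$, and $\mathcal F_{k+1}$-measurable random vectors $g^k$, set $z^{k+1}=z^k-\alpha_k(g^k+\nabla\mathrm{env}_{\lambda\varphi}(z^k))$, $x^{k+1}=\mathrm{prox}_{\lambda\varphi}(z^{k+1})$. Let $e^k=g^k-\nabla f(x^k)$. $L(\omega)=\sup_{\bar x\in\mathrm{cl}(\mathrm{conv}\{x^k(\omega)\}_k)}\mathrm{lip}\,\nabla f(\bar x)$ with $\mathrm{lip}\,\nabla f(\bar x)=\limsup_{x,x'\to\bar x,\,x\ne x'}\|\nabla f(x)-\nabla f(x')\|/\|x-x'\|$.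 $\tau_{m,n}=\sum_{i=m}^{n-1}\alpha_i$ and $e^{m,n}=-\sum_{i=m}^{n-1}\alpha_i[F^\lambda_{\mathrm{nor}}(z^i)-F^\lambda_{\mathrm{nor}}(z^m)]-\sum_{i=m}^{n-1}\alpha_ie^i$. *)

theory Defs
  imports "HOL-Analysis.Analysis"
begin

definition proper_fun :: "('a \<Rightarrow> ereal) \<Rightarrow> bool" where
  "proper_fun \<phi> \<longleftrightarrow> (\<forall>x. \<phi> x \<noteq> -\<infinity>) \<and> (\<exists>x. \<phi> x \<noteq> \<infinity>)"

definition convex_ereal_fun :: "('a::real_vector \<Rightarrow> ereal) \<Rightarrow> bool" where
  "convex_ereal_fun \<phi> \<longleftrightarrow>
     (\<forall>x y (t::real). 0 \<le> t \<and> t \<le> 1 \<longrightarrow>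
        \<phi> ((1 - t) *\<^sub>R x + t *\<^sub>R y) \<le> ereal (1 - t) * \<phi> x + ereal t * \<phi> y)"

definition lsc_fun :: "('a::topological_space \<Rightarrow> ereal) \<Rightarrow> bool" where
  "lsc_fun \<phi> \<longleftrightarrow> (\<forall>x. \<phi> x \<le> Liminf (at x) \<phi>)"

definition edom :: "('a \<Rightarrow> ereal) \<Rightarrow> 'a set" where
  "edom \<phi> = {x. \<phi> x < \<infinity>}"

text \<open>Proximal operator: the (unique, for proper lsc convex phi) minimiser.\<close>
definition prox :: "real \<Rightarrow> ('a::real_normed_vector \<Rightarrow> ereal) \<Rightarrow> 'a \<Rightarrow> 'a" where
  "prox lam \<phi> x = (SOME y. \<forall>y'. \<phi> y + ereal (norm (x - y)^2 / (2 * lam))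
                                 \<le> \<phi> y' + ereal (norm (x - y')^2 / (2 * lam)))"

definition grad_env :: "real \<Rightarrow> ('a::real_normed_vector \<Rightarrow> ereal) \<Rightarrow> 'a \<Rightarrow> 'a" where
  "grad_env lam \<phi> x = (1 / lam) *\<^sub>R (x - prox lam \<phi> x)"

definition Fnor :: "('a \<Rightarrow> 'a) \<Rightarrow> real \<Rightarrow> ('a::real_normed_vector \<Rightarrow> ereal) \<Rightarrow> 'a \<Rightarrow> 'a" where
  "Fnor gf lam \<phi> z = gf (prox lam \<phi> z) + (1 / lam) *\<^sub>R (z - prox lam \<phi> z)"

definition lipmod :: "('a::real_normed_vector \<Rightarrow> 'b::real_normed_vector) \<Rightarrow> 'a \<Rightarrow> ereal" where
  "lipmod G xb = Limsup (at (xb, xb) within {p. fst p \<noteq> snd p})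
      (\<lambda>p. ereal (norm (G (fst p) - G (snd p)) / norm (fst p - snd p)))"

definition Lconst :: "('a::real_normed_vector \<Rightarrow> 'a) \<Rightarrow> (nat \<Rightarrow> 'a) \<Rightarrow> ereal" where
  "Lconst G x = (SUP xb \<in> closure (convex hull (range x)). lipmod G xb)"

end

theory Submission
  imports Defs
begin

text \<open>Unrolling the iteration from \<open>m\<close> to \<open>n\<close> gives \<open>z\<^sup>n = z\<^sup>m - \<tau> F(z\<^sup>m) + e\<close>. Since every
  \<open>z\<close> satisfies \<open>z = \<lambda> (F(z) - \<nabla>f(prox z)) + prox z\<close>, this turns into
  \<open>F(z\<^sup>n) = (1 - \<tau>/\<lambda>) F(z\<^sup>m) + (\<nabla>f(x\<^sup>n) - \<nabla>f(x\<^sup>m)) - (x\<^sup>n - x\<^sup>m)/\<lambda> + e/\<lambda>\<close>.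
  Expanding the square, the only terms not already present in the claimed bound are
  \<open>\<parallel>\<nabla>f(x\<^sup>n) - \<nabla>f(x\<^sup>m)\<parallel>\<^sup>2 - (2/\<lambda>) \<langle>\<nabla>f(x\<^sup>n) - \<nabla>f(x\<^sup>m), x\<^sup>n - x\<^sup>m\<rangle>\<close>, which is at most
  \<open>(L\<^sup>2 + 2L/\<lambda>) \<parallel>x\<^sup>n - x\<^sup>m\<parallel>\<^sup>2\<close> because \<open>\<nabla>f\<close> is \<open>L\<close>-Lipschitz on the closed convex hull of the
  iterates: a bound on the pointwise Lipschitz modulus along a segment becomes a global
  Lipschitz bound on it by compactness of the segment.\<close>

lemma lipmod_less_imp_locally_lipschitz:
  fixes G :: "'a::real_normed_vector \<Rightarrow> 'b::real_normed_vector"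
  assumes "lipmod G p < ereal c"
  shows "\<exists>r>0. \<forall>q\<in>ball p r. \<forall>q'\<in>ball p r. norm (G q - G q') \<le> c * norm (q - q')"
proof -
  have "eventually (\<lambda>pp. ereal (norm (G (fst pp) - G (snd pp)) / norm (fst pp - snd pp)) < ereal c)
          (at (p, p) within {pp. fst pp \<noteq> snd pp})"
    using assms unfolding lipmod_def by (rule Limsup_lessD)
  then obtain d where "d > 0" and quotient_less: "\<And>pp. pp \<in> {pp. fst pp \<noteq> snd pp} \<Longrightarrow> pp \<noteq> (p, p) \<Longrightarrow>
      dist pp (p, p) < d \<Longrightarrow> ereal (norm (G (fst pp) - G (snd pp)) / norm (fst pp - snd pp)) < ereal c"
    unfolding eventually_at by blast
  have "norm (G q - G q') \<le> c * norm (q - q')" if "q \<in> ball p (d/2)" "q' \<in> ball p (d/2)" for q q'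
  proof (cases "q = q'")
    case False
    have "dist (q, q') (p, p) \<le> dist q p + dist q' p"
      using sqrt_sum_squares_le_sum_abs[of "dist q p" "dist q' p"] by (simp add: dist_Pair_Pair)
    also have "\<dots> < d"
      using that by (simp add: dist_commute)
    finally show ?thesis
      using quotient_less[of "(q, q')"] False by (force simp: divide_less_eq)
  qed simp
  then show ?thesis
    using \<open>d > 0\<close> by (intro exI[of _ "d/2"]) auto
qed

lemma compact_locally_imp_uniformly:
  fixes S :: "'a::metric_space set"
  assumes "compact S"
    and local: "\<And>p. p \<in> S \<Longrightarrow> \<exists>r>0. \<forall>q\<in>ball p r. \<forall>q'\<in>ball p r. P q q'"
  obtains \<delta> where "\<delta> > 0" "\<And>q q'. q \<in> S \<Longrightarrow> dist q q' < \<delta> \<Longrightarrow> P q q'"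
proof -
  obtain r where r: "\<And>p. p \<in> S \<Longrightarrow> r p > 0 \<and> (\<forall>q\<in>ball p (r p). \<forall>q'\<in>ball p (r p). P q q')"
    using local by metis
  have "S \<subseteq> \<Union> ((\<lambda>p. ball p (r p)) ` S)"
    using r by force
  then obtain \<delta> where "\<delta> > 0" and lebesgue: "\<And>q. q \<in> S \<Longrightarrow> \<exists>B \<in> (\<lambda>p. ball p (r p)) ` S. ball q \<delta> \<subseteq> B"
    using Heine_Borel_lemma[OF \<open>compact S\<close>] by (metis (no_types, lifting) imageE open_ball)
  have "P q q'" if "q \<in> S" "dist q q' < \<delta>" for q q'
  proof -
    obtain p where "p \<in> S" "ball q \<delta> \<subseteq> ball p (r p)"
      using lebesgue[OF \<open>q \<in> S\<close>] by blast
    moreover have "q \<in> ball q \<delta>" "q' \<in> ball q \<delta>"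
      using \<open>\<delta> > 0\<close> that by auto
    ultimately show ?thesis
      using r by blast
  qed
  then show ?thesis
    using \<open>\<delta> > 0\<close> that by blast
qed

lemma locally_lipschitz_on_segment_imp_norm_diff_le:
  fixes G :: "'a::real_normed_vector \<Rightarrow> 'b::real_normed_vector"
  assumes "\<And>p. p \<in> closed_segment a b \<Longrightarrow>
      \<exists>r>0. \<forall>q\<in>ball p r. \<forall>q'\<in>ball p r. norm (G q - G q') \<le> c * norm (q - q')"
  shows "norm (G b - G a) \<le> c * norm (b - a)"
proof -
  obtain \<delta> where "\<delta> > 0" and close: "\<And>q q'. q \<in> closed_segment a b \<Longrightarrow> dist q q' < \<delta> \<Longrightarrow>
      norm (G q' - G q) \<le> c * norm (q' - q)"
    using compact_locally_imp_uniformly[OF compact_segment assms]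
    by (metis norm_minus_commute)
  obtain N :: nat where N: "norm (b - a) / \<delta> < N"
    using reals_Archimedean2 by blast
  then have "N > 0"
    using \<open>\<delta> > 0\<close> by (metis divide_nonneg_pos norm_ge_zero not_gr0 not_less of_nat_0)
  define y where "y k = a + (real k / real N) *\<^sub>R (b - a)" for k
  have y_in_segment: "y k \<in> closed_segment a b" if "k \<le> N" for k
    using that \<open>N > 0\<close> unfolding y_def closed_segment_def
    by (intro CollectI exI[of _ "real k / real N"]) (auto simp: algebra_simps)
  have y_step: "y (Suc k) - y k = (1 / real N) *\<^sub>R (b - a)" for k
    by (simp add: y_def add_divide_distrib algebra_simps)
  have "norm (G (y (Suc k)) - G (y k)) \<le> c * (norm (b - a) / real N)" if "k < N" for k
  proof -
    have "dist (y k) (y (Suc k)) = norm (b - a) / real N"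
      using y_step[of k] by (simp add: dist_norm norm_minus_commute[of "y k"])
    also have "\<dots> < \<delta>"
      using N \<open>\<delta> > 0\<close> \<open>N > 0\<close> by (simp add: divide_less_eq mult.commute)
    finally have "dist (y k) (y (Suc k)) < \<delta>" .
    then have "norm (G (y (Suc k)) - G (y k)) \<le> c * norm (y (Suc k) - y k)"
      using close[OF y_in_segment[of k]] that by simp
    then show ?thesis
      by (simp add: y_step)
  qed
  then have "(\<Sum>k<N. norm (G (y (Suc k)) - G (y k))) \<le> (\<Sum>k<N. c * (norm (b - a) / real N))"
    by (intro sum_mono) auto
  moreover have "G b - G a = (\<Sum>k<N. G (y (Suc k)) - G (y k))"
    using \<open>N > 0\<close> by (subst sum_lessThan_telescope) (simp add: y_def)
  ultimately show ?thesis
    using \<open>N > 0\<close> norm_sum[of "\<lambda>k. G (y (Suc k)) - G (y k)" "{..<N}"] by simp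
qed

lemma lipmod_le_imp_norm_diff_le_on_convex:
  fixes G :: "'a::real_normed_vector \<Rightarrow> 'b::real_normed_vector"
  assumes "convex S" "a \<in> S" "b \<in> S" and lipmod_le: "\<And>p. p \<in> S \<Longrightarrow> lipmod G p \<le> ereal L"
  shows "norm (G b - G a) \<le> L * norm (b - a)"
proof (rule field_le_epsilon)
  fix \<epsilon> :: real
  assume "\<epsilon> > 0"
  define \<eta> where "\<eta> = \<epsilon> / (norm (b - a) + 1)"
  have "norm (b - a) + 1 > 0"
    by (simp add: add_nonneg_pos)
  then have "\<eta> > 0"
    using \<open>\<epsilon> > 0\<close> by (simp add: \<eta>_def)
  have "norm (G b - G a) \<le> (L + \<eta>) * norm (b - a)"
  proof (rule locally_lipschitz_on_segment_imp_norm_diff_le)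
    fix p
    assume "p \<in> closed_segment a b"
    then have "lipmod G p \<le> ereal L"
      using assms closed_segment_subset lipmod_le by blast
    also have "\<dots> < ereal (L + \<eta>)"
      using \<open>\<eta> > 0\<close> by simp
    finally show "\<exists>r>0. \<forall>q\<in>ball p r. \<forall>q'\<in>ball p r. norm (G q - G q') \<le> (L + \<eta>) * norm (q - q')"
      by (rule lipmod_less_imp_locally_lipschitz)
  qed
  also have "\<dots> \<le> L * norm (b - a) + \<epsilon>"
  proof -
    have "\<eta> * norm (b - a) \<le> \<eta> * (norm (b - a) + 1)"
      using \<open>\<eta> > 0\<close> by simp
    also have "\<dots> = \<epsilon>"
      using \<open>norm (b - a) + 1 > 0\<close> by (simp add: \<eta>_def)
    finally show ?thesis
      by (simp add: distrib_right)
  qed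
  finally show "norm (G b - G a) \<le> L * norm (b - a) + \<epsilon>" .
qed

lemma Lconst_finite_imp_norm_diff_le:
  fixes G :: "'a::real_normed_vector \<Rightarrow> 'a"
  assumes "Lconst G x < \<infinity>"
  shows "norm (G (x n) - G (x m)) \<le> real_of_ereal (Lconst G x) * norm (x n - x m)"
proof (rule lipmod_le_imp_norm_diff_le_on_convex)
  show "convex (closure (convex hull range x))"
    by (simp add: convex_closure)
  show "x m \<in> closure (convex hull range x)" "x n \<in> closure (convex hull range x)"
    by (auto intro: closure_subset[THEN subsetD] hull_inc)
  show "lipmod G p \<le> ereal (real_of_ereal (Lconst G x))" if "p \<in> closure (convex hull range x)" for p
  proof -
    have "lipmod G p \<le> Lconst G x"
      unfolding Lconst_def using that by (rule SUP_upper)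
    also have "\<dots> \<le> ereal (real_of_ereal (Lconst G x))"
      using assms by (cases "Lconst G x") auto
    finally show ?thesis .
  qed
qed

lemma iteration_unroll:
  fixes z v :: "nat \<Rightarrow> 'a::real_vector"
  assumes "\<And>k. z (Suc k) = z k - \<alpha> k *\<^sub>R v k" "m \<le> n"
  shows "z n = z m - (\<Sum>i=m..<n. \<alpha> i *\<^sub>R v i)"
  using sum_Suc_diff'[OF \<open>m \<le> n\<close>, of z] assms(1) by (simp add: sum_negf algebra_simps)

lemma Fnor_after_perturbed_step:
  assumes "lam \<noteq> 0" "z' = z - \<tau> *\<^sub>R Fnor G lam \<phi> z + e"
  shows "Fnor G lam \<phi> z' = (1 - \<tau> / lam) *\<^sub>R Fnor G lam \<phi> z
      + (G (prox lam \<phi> z') - G (prox lam \<phi> z)) - (1 / lam) *\<^sub>R (prox lam \<phi> z' - prox lam \<phi> z)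
      + (1 / lam) *\<^sub>R e"
proof -
  define F x x' where "F = Fnor G lam \<phi> z" and "x = prox lam \<phi> z" and "x' = prox lam \<phi> z'"
  have "z = lam *\<^sub>R (F - G x) + x"
    using assms(1) by (simp add: F_def x_def Fnor_def)
  then have z'_eq: "z' = lam *\<^sub>R (F - G x) + x - \<tau> *\<^sub>R F + e"
    using assms(2) by (simp add: F_def)
  have "Fnor G lam \<phi> z' = G x' + (1 / lam) *\<^sub>R (z' - x')"
    by (simp add: Fnor_def x'_def)
  also have "\<dots> = (1 - \<tau> / lam) *\<^sub>R F + (G x' - G x) - (1 / lam) *\<^sub>R (x' - x) + (1 / lam) *\<^sub>R e"
    unfolding z'_eq using assms(1) by (simp add: algebra_simps scaleR_diff_left)
  finally show ?thesis
    by (simp add: F_def x_def x'_def)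
qed

lemma norm_combination_squared:
  fixes A B C D :: "'a::real_inner"
  assumes "l \<noteq> 0"
  shows "norm (s *\<^sub>R A + B - (1/l) *\<^sub>R C + (1/l) *\<^sub>R D)^2
    = s^2 * norm A^2 + (norm B^2 - (2/l) * (B \<bullet> C)) + (1/l^2) * norm C^2 + (1/l^2) * norm D^2
      + (2/l) * s * (A \<bullet> (l *\<^sub>R B - C + D)) + (2/l) * (B \<bullet> D) - (2/l^2) * (D \<bullet> C)"
  using assms unfolding power2_norm_eq_inner
  by (simp add: inner_add_left inner_add_right inner_diff_left inner_diff_right
      inner_commute power2_eq_square field_simps)

lemma norm_sq_minus_inner_le_if_lipschitz:
  fixes u v :: "'a::real_inner"
  assumes "norm u \<le> L * norm v" "lam > 0"
  shows "norm u^2 - (2/lam) * (u \<bullet> v) \<le> (L^2 + 2 * L / lam) * norm v^2"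
proof -
  have "norm u^2 \<le> L^2 * norm v^2"
    using assms(1) power_mono[OF assms(1)] by (simp add: power_mult_distrib)
  moreover have "- (u \<bullet> v) \<le> L * norm v^2"
    using norm_cauchy_schwarz[of "- u" v] mult_right_mono[OF assms(1), of "norm v"]
    by (simp add: power2_eq_square)
  ultimately show ?thesis
    using assms(2) mult_left_mono[of "- (u \<bullet> v)" "L * norm v^2" "2/lam"]
    by (simp add: algebra_simps)
qed

theorem lemma2p9:
  fixes \<phi> :: "'a::euclidean_space \<Rightarrow> ereal"
    and f :: "'a \<Rightarrow> real" and gradf :: "'a \<Rightarrow> 'a" and U :: "'a set"
    and lam :: "real" and \<alpha> :: "nat \<Rightarrow> real" and z0 :: "'a"
    and g :: "nat \<Rightarrow> 'w \<Rightarrow> 'a"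
    and z x :: "nat \<Rightarrow> 'w \<Rightarrow> 'a"
    and \<omega> :: 'w and m n :: nat
  assumes phi_proper: "proper_fun \<phi>"
    and phi_convex: "convex_ereal_fun \<phi>"
    and phi_lsc: "lsc_fun \<phi>"
    and U_open: "open U" and dom_sub: "edom \<phi> \<subseteq> U"
    and f_grad: "\<And>y. y \<in> U \<Longrightarrow> (f has_derivative (\<lambda>h. gradf y \<bullet> h)) (at y)"
    and gradf_cont: "continuous_on U gradf"
    and lam_pos: "lam > 0"
    and alpha_pos: "\<And>k. \<alpha> k > 0"
    and z_0: "\<And>w. z 0 w = z0"
    and z_step: "\<And>k w. z (Suc k) w = z k w - \<alpha> k *\<^sub>R (g k w + grad_env lam \<phi> (z k w))"
    and x_def: "\<And>k w. x k w = prox lam \<phi> (z k w)"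
    and mn: "m < n"
    and L_fin: "Lconst gradf (\<lambda>k. x k \<omega>) < \<infinity>"
  shows
    "let L = real_of_ereal (Lconst gradf (\<lambda>k. x k \<omega>));
         F = Fnor gradf lam \<phi>;
         \<tau> = (\<Sum>i=m..<n. \<alpha> i);
         ee = (\<lambda>i. g i \<omega> - gradf (x i \<omega>));
         e = - (\<Sum>i=m..<n. \<alpha> i *\<^sub>R (F (z i \<omega>) - F (z m \<omega>)))
             - (\<Sum>i=m..<n. \<alpha> i *\<^sub>R ee i);
         dx = x n \<omega> - x m \<omega>;
         dg = gradf (x n \<omega>) - gradf (x m \<omega>)
     in norm (F (z n \<omega>))^2
        \<le> (1 - \<tau> / lam)^2 * norm (F (z m \<omega>))^2
          + (L^2 + 2 * L / lam + 1 / lam^2) * norm dx ^2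
          + (1 / lam^2) * norm e ^2
          + (2 / lam) * (1 - \<tau> / lam) * (F (z m \<omega>) \<bullet> (lam *\<^sub>R dg - dx + e))
          + (2 / lam) * (dg \<bullet> e)
          - (2 / lam^2) * (e \<bullet> dx)"
  \<comment> \<open>Only the recursion, \<open>x\<^sup>k = prox z\<^sup>k\<close>, \<open>\<lambda> > 0\<close> and \<open>L < \<infinity>\<close> are used: the estimate is
    pure algebra plus the Lipschitz bound, valid for any \<open>\<phi>\<close> and any map \<open>gradf\<close>.\<close>
proof -
  define L where "L = real_of_ereal (Lconst gradf (\<lambda>k. x k \<omega>))"
  define F where "F = Fnor gradf lam \<phi>"
  define \<tau> where "\<tau> = (\<Sum>i=m..<n. \<alpha> i)"
  define ee where "ee = (\<lambda>i. g i \<omega> - gradf (x i \<omega>))"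
  define e where "e = - (\<Sum>i=m..<n. \<alpha> i *\<^sub>R (F (z i \<omega>) - F (z m \<omega>))) - (\<Sum>i=m..<n. \<alpha> i *\<^sub>R ee i)"
  define dx where "dx = x n \<omega> - x m \<omega>"
  define dg where "dg = gradf (x n \<omega>) - gradf (x m \<omega>)"
  have lam_ne: "lam \<noteq> 0"
    using lam_pos by simp
  have "z (Suc k) \<omega> = z k \<omega> - \<alpha> k *\<^sub>R (F (z k \<omega>) + ee k)" for k
    using z_step[of k \<omega>] by (simp add: F_def Fnor_def ee_def grad_env_def x_def)
  then have z_n_sum: "z n \<omega> = z m \<omega> - (\<Sum>i=m..<n. \<alpha> i *\<^sub>R (F (z i \<omega>) + ee i))"
    using mn by (intro iteration_unroll) auto
  have "e = \<tau> *\<^sub>R F (z m \<omega>) - (\<Sum>i=m..<n. \<alpha> i *\<^sub>R (F (z i \<omega>) + ee i))"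
    by (simp add: e_def \<tau>_def scaleR_diff_right scaleR_add_right sum.distrib sum_subtractf
        scaleR_sum_left algebra_simps)
  with z_n_sum have "z n \<omega> = z m \<omega> - \<tau> *\<^sub>R F (z m \<omega>) + e"
    by simp
  then have F_n: "F (z n \<omega>) = (1 - \<tau>/lam) *\<^sub>R F (z m \<omega>) + dg - (1/lam) *\<^sub>R dx + (1/lam) *\<^sub>R e"
    unfolding F_def dg_def dx_def x_def by (rule Fnor_after_perturbed_step[OF lam_ne])
  have "norm dg \<le> L * norm dx"
    using Lconst_finite_imp_norm_diff_le[OF L_fin] by (simp add: L_def dg_def dx_def)
  then have "norm dg^2 - (2/lam) * (dg \<bullet> dx) \<le> (L^2 + 2 * L / lam) * norm dx^2"
    using lam_pos by (rule norm_sq_minus_inner_le_if_lipschitz)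
  then have "norm (F (z n \<omega>))^2
        \<le> (1 - \<tau> / lam)^2 * norm (F (z m \<omega>))^2
          + (L^2 + 2 * L / lam + 1 / lam^2) * norm dx ^2
          + (1 / lam^2) * norm e ^2
          + (2 / lam) * (1 - \<tau> / lam) * (F (z m \<omega>) \<bullet> (lam *\<^sub>R dg - dx + e))
          + (2 / lam) * (dg \<bullet> e)
          - (2 / lam^2) * (e \<bullet> dx)"
    unfolding F_n norm_combination_squared[OF lam_ne]
    by (simp add: algebra_simps)
  then show ?thesis
    unfolding Let_def L_def F_def \<tau>_def ee_def e_def dx_def dg_def .
qed

end
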